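(* For $1\le i\le k$ let $G_i$ be an $r_i$-regular graph with $n_i\ge 2$ vertices and let $A_i$ be an Abelian group of order $n_i$. Let $r=\sum_{i=1}^k r_i$ and suppose $\exp(A_i)$ divides $r-r_i$ for every $1\le i\le k$. (a) If each $G_i$ is $A_i$-distance antimagic, then $G_1\Box\cdots\Box G_k$ is $A_1\times\cdots\times A_k$-distance antimagic. (b) If each $G_i$ is $A_i$-distance magic, then $G_1\Box\cdots\Box G_k$ is $A_1\times\cdots\times A_k$-distance magic.
   Context: The Cartesian product $G_1\Box\cdots\Box G_k$ has vertex set $V(G_1)\times\cdots\times V(G_k)$, with $(x_1,\ldots,x_k)$ and $(y_1,\ldots,y_k)$ adjacent iff they differ in exactly one coordinate $i$ and $x_iy_i\in E(G_i)$. $\exp(A)$ is the least positive integer $m$ with $mx=0$ for all $x\in A$. For a graph $G$ with $n$ vertices and an Abelian group $A$ of order $n$ (written additively), and a bijection $f:V(G)\to A$, the weight of $x$ is $w_f(x)=\sum_{y\in N(x)} f(y)$ computed in $A$ ($N(x)$ the open neighbourhood). $f$ is an $A$-distance antimagic labelling if all weights are pairwise distinct, and an $A$-distance magic labelling if all weights are equal. $G$ is $A$-distance antimagic (resp. magic) if it admits such a labelling. *)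

theory Defs
  imports "HOL-Algebra.Product_Groups" "HOL-Algebra.FiniteProduct"
begin

definition simple_graph :: "'v set \<Rightarrow> ('v \<Rightarrow> 'v \<Rightarrow> bool) \<Rightarrow> bool" where
  "simple_graph V E \<longleftrightarrow> finite V \<and> (\<forall>x y. E x y \<longrightarrow> x \<in> V \<and> y \<in> V)
     \<and> (\<forall>x y. E x y \<longrightarrow> E y x) \<and> (\<forall>x. \<not> E x x)"

definition nbhd :: "'v set \<Rightarrow> ('v \<Rightarrow> 'v \<Rightarrow> bool) \<Rightarrow> 'v \<Rightarrow> 'v set" where
  "nbhd V E x = {y \<in> V. E x y}"

definition regular :: "'v set \<Rightarrow> ('v \<Rightarrow> 'v \<Rightarrow> bool) \<Rightarrow> nat \<Rightarrow> bool" where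
  "regular V E r \<longleftrightarrow> (\<forall>x\<in>V. card (nbhd V E x) = r)"

definition cart_V :: "'i set \<Rightarrow> ('i \<Rightarrow> 'v set) \<Rightarrow> ('i \<Rightarrow> 'v) set" where
  "cart_V I V = (\<Pi>\<^sub>E i\<in>I. V i)"

definition cart_E :: "'i set \<Rightarrow> ('i \<Rightarrow> 'v \<Rightarrow> 'v \<Rightarrow> bool) \<Rightarrow> ('i \<Rightarrow> 'v) \<Rightarrow> ('i \<Rightarrow> 'v) \<Rightarrow> bool" where
  "cart_E I E x y \<longleftrightarrow> (\<exists>i\<in>I. E i (x i) (y i) \<and> (\<forall>j\<in>I. j \<noteq> i \<longrightarrow> x j = y j))"

definition group_exponent :: "('a, 'b) monoid_scheme \<Rightarrow> nat" where
  "group_exponent G = (LEAST m. 0 < m \<and> (\<forall>x\<in>carrier G. x [^]\<^bsub>G\<^esub> m = \<one>\<^bsub>G\<^esub>))"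

text \<open>Weight of x: group sum (= finprod in the multiplicative notation) of labels of neighbours.\<close>
definition weight :: "('a, 'b) monoid_scheme \<Rightarrow> 'v set \<Rightarrow> ('v \<Rightarrow> 'v \<Rightarrow> bool) \<Rightarrow> ('v \<Rightarrow> 'a) \<Rightarrow> 'v \<Rightarrow> 'a" where
  "weight A V E f x = finprod A f (nbhd V E x)"

definition dist_antimagic :: "'v set \<Rightarrow> ('v \<Rightarrow> 'v \<Rightarrow> bool) \<Rightarrow> ('a, 'b) monoid_scheme \<Rightarrow> bool" where
  "dist_antimagic V E A \<longleftrightarrow>
     (\<exists>f. bij_betw f V (carrier A) \<and> inj_on (weight A V E f) V)"

definition dist_magic :: "'v set \<Rightarrow> ('v \<Rightarrow> 'v \<Rightarrow> bool) \<Rightarrow> ('a, 'b) monoid_scheme \<Rightarrow> bool" where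
  "dist_magic V E A \<longleftrightarrow>
     (\<exists>f. bij_betw f V (carrier A) \<and> (\<forall>x\<in>V. \<forall>y\<in>V. weight A V E f x = weight A V E f y))"

end

theory Submission
  imports Defs "HOL-Algebra.Multiplicative_Group"
begin

text \<open>
  Given bijective labellings f i of the factors G i by the groups A i, label the product graph by
  the product labelling y \<mapsto> (f i (y i))_i with values in the direct product of the A i.
  A neighbour of x in the product differs from x in exactly one coordinate i, so the neighbourhood
  of x is the disjoint union over i of copies of the neighbourhoods of x i in G i; in particular
  the product is (\<Sum>i. r i)-regular.  Summing the j-th coordinate of the labels over this
  neighbourhood yields the weight of x j in G j plus r - r j copies of f j (x j), and the
  hypothesis that the exponent of A j divides r - r j kills the latter term.  Hence the weight of
  x in the product is exactly the tuple of the weights of its coordinates, from which both the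
  antimagic and the magic statement follow immediately.
\<close>

lemma (in group) pow_group_exponent_dvd:
  assumes fin: "finite (carrier G)" and a: "a \<in> carrier G" and dvd: "group_exponent G dvd n"
  shows "a [^] n = \<one>"
proof -
  have "0 < order G"
    using fin one_closed by (auto simp: order_def card_gt_0_iff)
  then have "\<exists>m::nat. 0 < m \<and> (\<forall>x\<in>carrier G. x [^] m = \<one>)"
    by (intro exI[of _ "order G"]) (simp add: pow_order_eq_1)
  then have annihilates: "\<forall>x\<in>carrier G. x [^] group_exponent G = \<one>"
    unfolding group_exponent_def by (rule LeastI2_ex) blast
  obtain q where "n = group_exponent G * q"
    using dvd by blast
  then have "a [^] n = (a [^] group_exponent G) [^] q"
    using a by (simp add: nat_pow_pow)
  also have "\<dots> = \<one>"
    using annihilates a by simp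
  finally show ?thesis .
qed

lemma comm_group_product_group:
  assumes "\<And>i. i \<in> I \<Longrightarrow> comm_group (G i)"
  shows "comm_group (product_group I G)"
proof (rule group.group_comm_groupI)
  show "group (product_group I G)"
    using assms by (simp add: comm_group.axioms(2))
  fix x y
  assume "x \<in> carrier (product_group I G)" "y \<in> carrier (product_group I G)"
  then show "x \<otimes>\<^bsub>product_group I G\<^esub> y = y \<otimes>\<^bsub>product_group I G\<^esub> x"
    using assms by (auto simp: PiE_iff comm_group.axioms(1) comm_monoid.m_comm intro!: restrict_ext)
qed

lemma finprod_product_group:
  assumes cg: "\<And>i. i \<in> I \<Longrightarrow> comm_group (G i)" and S: "finite S"
    and f: "f \<in> S \<rightarrow> carrier (product_group I G)"
  shows "finprod (product_group I G) f S = (\<lambda>i\<in>I. finprod (G i) (\<lambda>s. f s i) S)"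
  using S f
proof (induction S rule: finite_induct)
  case empty
  interpret P: comm_group "product_group I G"
    using comm_group_product_group[OF cg] .
  show ?case
    using cg by (auto simp: comm_group.axioms(1) comm_monoid.finprod_empty intro!: restrict_ext)
next
  case (insert a S)
  interpret P: comm_group "product_group I G"
    using comm_group_product_group[OF cg] .
  have fS: "f \<in> S \<rightarrow> carrier (product_group I G)" and fa: "f a \<in> carrier (product_group I G)"
    using insert.prems by auto
  have component: "(\<lambda>s. f s i) \<in> S \<rightarrow> carrier (G i)" "f a i \<in> carrier (G i)" if "i \<in> I" for i
    using fS fa that by (auto simp: Pi_iff PiE_iff)
  have "finprod (product_group I G) f (insert a S) = f a \<otimes>\<^bsub>product_group I G\<^esub> finprod (product_group I G) f S"
    using insert.hyps fS fa by simp
  also have "\<dots> = (\<lambda>i\<in>I. f a i \<otimes>\<^bsub>G i\<^esub> finprod (G i) (\<lambda>s. f s i) S)"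
    by (auto simp: insert.IH[OF fS] intro!: restrict_ext)
  also have "\<dots> = (\<lambda>i\<in>I. finprod (G i) (\<lambda>s. f s i) (insert a S))"
    using insert.hyps component cg by (auto simp: comm_group.axioms(1) comm_monoid.finprod_insert intro!: restrict_ext)
  finally show ?case .
qed

lemma nbhd_cart:
  assumes x: "x \<in> cart_V I V"
  shows "nbhd (cart_V I V) (cart_E I E) x = (\<Union>i\<in>I. (\<lambda>z. x(i := z)) ` nbhd (V i) (E i) (x i))"
proof (intro equalityI subsetI)
  fix y assume "y \<in> nbhd (cart_V I V) (cart_E I E) x"
  then have y: "y \<in> cart_V I V" and "cart_E I E x y"
    by (auto simp: nbhd_def)
  then obtain i where i: "i \<in> I" "E i (x i) (y i)" and same: "\<forall>j\<in>I. j \<noteq> i \<longrightarrow> x j = y j"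
    by (auto simp: cart_E_def)
  have "y = x(i := y i)"
  proof
    fix j show "y j = (x(i := y i)) j"
      using x y same by (cases "j \<in> I") (auto simp: cart_V_def PiE_iff extensional_def)
  qed
  moreover have "y i \<in> nbhd (V i) (E i) (x i)"
    using i y by (auto simp: nbhd_def cart_V_def)
  ultimately show "y \<in> (\<Union>i\<in>I. (\<lambda>z. x(i := z)) ` nbhd (V i) (E i) (x i))"
    using i by blast
next
  fix y assume "y \<in> (\<Union>i\<in>I. (\<lambda>z. x(i := z)) ` nbhd (V i) (E i) (x i))"
  then obtain i z where i: "i \<in> I" "z \<in> V i" "E i (x i) z" and y: "y = x(i := z)"
    by (auto simp: nbhd_def)
  have "y \<in> cart_V I V"
    using x i y by (auto simp: cart_V_def PiE_iff extensional_def)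
  moreover have "cart_E I E x y"
    using i y unfolding cart_E_def by auto
  ultimately show "y \<in> nbhd (cart_V I V) (cart_E I E) x"
    by (simp add: nbhd_def)
qed

lemma nbhd_cart_disjoint:
  assumes irrefl: "\<not> E i (x i) (x i)" and "i \<noteq> i'"
  shows "(\<lambda>z. x(i := z)) ` nbhd (V i) (E i) (x i) \<inter> (\<lambda>z. x(i' := z)) ` nbhd (V i') (E i') (x i') = {}"
proof -
  have "x(i := z) \<noteq> x(i' := z')" if "E i (x i) z" for z z'
    using that irrefl \<open>i \<noteq> i'\<close> by (metis fun_upd_other fun_upd_same)
  then show ?thesis
    by (auto simp: nbhd_def)
qed

lemma card_nbhd_update:
  "card ((\<lambda>z. x(i := z)) ` nbhd (V i) (E i) (x i)) = card (nbhd (V i) (E i) (x i))"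
  by (rule card_image) (metis (no_types, lifting) fun_upd_same inj_onI)

lemma finite_cart_V:
  assumes "finite I" "\<And>i. i \<in> I \<Longrightarrow> simple_graph (V i) (E i)"
  shows "finite (cart_V I V)"
  using assms by (auto simp: cart_V_def simple_graph_def intro: finite_PiE)

lemma regular_cart:
  assumes I: "finite I"
    and sg: "\<And>i. i \<in> I \<Longrightarrow> simple_graph (V i) (E i)"
    and reg: "\<And>i. i \<in> I \<Longrightarrow> regular (V i) (E i) (rr i)"
  shows "regular (cart_V I V) (cart_E I E) (\<Sum>i\<in>I. rr i)"
  unfolding regular_def
proof
  fix x assume x: "x \<in> cart_V I V"
  have fin: "finite ((\<lambda>z. x(i := z)) ` nbhd (V i) (E i) (x i))" if "i \<in> I" for i
    using sg[OF that] by (auto simp: simple_graph_def nbhd_def)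
  have disj: "(\<lambda>z. x(i := z)) ` nbhd (V i) (E i) (x i) \<inter> (\<lambda>z. x(i' := z)) ` nbhd (V i') (E i') (x i') = {}"
    if "i \<in> I" "i' \<noteq> i" for i i'
    using sg[OF that(1)] that by (intro nbhd_cart_disjoint) (auto simp: simple_graph_def)
  have deg: "card (nbhd (V i) (E i) (x i)) = rr i" if "i \<in> I" for i
    using reg[OF that] x that by (auto simp: regular_def cart_V_def)
  show "card (nbhd (cart_V I V) (cart_E I E) x) = (\<Sum>i\<in>I. rr i)"
    unfolding nbhd_cart[OF x] using I fin disj
    by (simp add: card_UN_disjoint card_nbhd_update deg)
qed

text \<open>Key counting step: multiplying a function of the j-th coordinate over the neighbourhood of x
  in the product gives its product over the neighbourhood of x j in G j, times r - r j copies of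
  its value at x j (one for each neighbour that changes another coordinate).\<close>
lemma (in comm_monoid) finprod_nbhd_cart_coordinate:
  assumes I: "finite I"
    and sg: "\<And>i. i \<in> I \<Longrightarrow> simple_graph (V i) (E i)"
    and reg: "\<And>i. i \<in> I \<Longrightarrow> regular (V i) (E i) (rr i)"
    and j: "j \<in> I" and g: "g \<in> V j \<rightarrow> carrier G" and x: "x \<in> cart_V I V"
  shows "(\<Otimes>y\<in>nbhd (cart_V I V) (cart_E I E) x. g (y j))
       = (\<Otimes>z\<in>nbhd (V j) (E j) (x j). g z) \<otimes> g (x j) [^] ((\<Sum>i\<in>I. rr i) - rr j)"
proof -
  define N where "N = nbhd (cart_V I V) (cart_E I E) x"
  define S where "S = (\<lambda>z. x(j := z)) ` nbhd (V j) (E j) (x j)"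
  have xj: "x j \<in> V j"
    using x j by (auto simp: cart_V_def)
  have finN: "finite N"
    using finite_cart_V[OF I sg] by (auto simp: N_def nbhd_def)
  have SN: "S \<subseteq> N"
    using nbhd_cart[OF x] j by (auto simp: N_def S_def)
  have gN: "(\<lambda>y. g (y j)) \<in> N \<rightarrow> carrier G"
    using g j by (auto simp: N_def nbhd_def cart_V_def)
  have rest: "y j = x j" if "y \<in> N - S" for y
    using that nbhd_cart[OF x] by (auto simp: N_def S_def)
  have "card N = (\<Sum>i\<in>I. rr i)" and "card S = rr j"
    using regular_cart[OF I sg reg] reg[OF j] x xj
    by (auto simp: N_def S_def regular_def card_nbhd_update)
  then have card_rest: "card (N - S) = (\<Sum>i\<in>I. rr i) - rr j"
    using SN finN by (simp add: card_Diff_subset finite_subset)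
  have "(\<Otimes>y\<in>N. g (y j)) = (\<Otimes>y\<in>S. g (y j)) \<otimes> (\<Otimes>y\<in>N - S. g (y j))"
    using finprod_Un_disjoint[of S "N - S" "\<lambda>y. g (y j)"] SN finN gN
    by (auto simp: Un_absorb1 finite_subset)
  also have "(\<Otimes>y\<in>S. g (y j)) = (\<Otimes>z\<in>nbhd (V j) (E j) (x j). g z)"
    unfolding S_def using g by (subst finprod_reindex) (auto simp: nbhd_def inj_on_def fun_eq_iff)
  also have "(\<Otimes>y\<in>N - S. g (y j)) = (\<Otimes>y\<in>N - S. g (x j))"
    using rest g xj by (intro finprod_cong') auto
  also have "\<dots> = g (x j) [^] card (N - S)"
    using g xj by (intro finprod_const) auto
  also note card_rest
  finally show ?thesis
    by (simp add: N_def)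
qed

definition prod_labelling :: "'i set \<Rightarrow> ('i \<Rightarrow> 'v \<Rightarrow> 'a) \<Rightarrow> ('i \<Rightarrow> 'v) \<Rightarrow> ('i \<Rightarrow> 'a)" where
  "prod_labelling I f y = (\<lambda>i\<in>I. f i (y i))"

lemma bij_betw_prod_labelling:
  assumes b: "\<And>i. i \<in> I \<Longrightarrow> bij_betw (f i) (V i) (C i)"
  shows "bij_betw (prod_labelling I f) (cart_V I V) (\<Pi>\<^sub>E i\<in>I. C i)"
proof (rule bij_betwI[where g = "\<lambda>c. \<lambda>i\<in>I. inv_into (V i) (f i) (c i)"])
  show "prod_labelling I f \<in> cart_V I V \<rightarrow> (\<Pi>\<^sub>E i\<in>I. C i)"
    by (auto simp: prod_labelling_def cart_V_def PiE_iff intro!: bij_betw_apply[OF b])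
  show "(\<lambda>c. \<lambda>i\<in>I. inv_into (V i) (f i) (c i)) \<in> (\<Pi>\<^sub>E i\<in>I. C i) \<rightarrow> cart_V I V"
    by (auto simp: cart_V_def PiE_iff intro!: bij_betw_apply[OF bij_betw_inv_into[OF b]])
  show "(\<lambda>i\<in>I. inv_into (V i) (f i) (prod_labelling I f y i)) = y" if "y \<in> cart_V I V" for y
    using that by (auto simp: prod_labelling_def cart_V_def PiE_iff extensional_def bij_betw_inv_into_left[OF b])
  show "prod_labelling I f (\<lambda>i\<in>I. inv_into (V i) (f i) (c i)) = c" if "c \<in> (\<Pi>\<^sub>E i\<in>I. C i)" for c
    using that by (auto simp: prod_labelling_def PiE_iff extensional_def bij_betw_inv_into_right[OF b])
qed

lemma weight_prod_labelling:
  assumes I: "finite I"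
    and sg: "\<And>i. i \<in> I \<Longrightarrow> simple_graph (V i) (E i)"
    and reg: "\<And>i. i \<in> I \<Longrightarrow> regular (V i) (E i) (rr i)"
    and cg: "\<And>i. i \<in> I \<Longrightarrow> comm_group (A i)"
    and f: "\<And>i. i \<in> I \<Longrightarrow> f i \<in> V i \<rightarrow> carrier (A i)"
    and x: "x \<in> cart_V I V"
  shows "weight (product_group I A) (cart_V I V) (cart_E I E) (prod_labelling I f) x
       = (\<lambda>j\<in>I. weight (A j) (V j) (E j) (f j) (x j) \<otimes>\<^bsub>A j\<^esub> f j (x j) [^]\<^bsub>A j\<^esub> ((\<Sum>i\<in>I. rr i) - rr j))"
proof -
  define N where "N = nbhd (cart_V I V) (cart_E I E) x"
  have "finite N"
    using finite_cart_V[OF I sg] by (auto simp: N_def nbhd_def)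
  moreover have "prod_labelling I f \<in> N \<rightarrow> carrier (product_group I A)"
    using f by (fastforce simp: N_def nbhd_def cart_V_def prod_labelling_def PiE_iff)
  ultimately have "weight (product_group I A) (cart_V I V) (cart_E I E) (prod_labelling I f) x
      = (\<lambda>j\<in>I. finprod (A j) (\<lambda>y. prod_labelling I f y j) N)"
    unfolding weight_def N_def[symmetric] by (simp add: finprod_product_group[OF cg])
  also have "\<dots> = (\<lambda>j\<in>I. weight (A j) (V j) (E j) (f j) (x j) \<otimes>\<^bsub>A j\<^esub> f j (x j) [^]\<^bsub>A j\<^esub> ((\<Sum>i\<in>I. rr i) - rr j))"
  proof (rule restrict_ext)
    fix j assume j: "j \<in> I"
    interpret Aj: comm_group "A j"
      using cg[OF j] .
    have "finprod (A j) (\<lambda>y. prod_labelling I f y j) N = finprod (A j) (\<lambda>y. f j (y j)) N"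
      using j by (simp add: prod_labelling_def)
    also have "\<dots> = weight (A j) (V j) (E j) (f j) (x j) \<otimes>\<^bsub>A j\<^esub> f j (x j) [^]\<^bsub>A j\<^esub> ((\<Sum>i\<in>I. rr i) - rr j)"
      unfolding N_def weight_def by (rule Aj.finprod_nbhd_cart_coordinate[OF I sg reg j f[OF j] x])
    finally show "finprod (A j) (\<lambda>y. prod_labelling I f y j) N
        = weight (A j) (V j) (E j) (f j) (x j) \<otimes>\<^bsub>A j\<^esub> f j (x j) [^]\<^bsub>A j\<^esub> ((\<Sum>i\<in>I. rr i) - rr j)" .
  qed
  finally show ?thesis .
qed

lemma weight_prod_labelling_exponent:
  assumes I: "finite I"
    and sg: "\<And>i. i \<in> I \<Longrightarrow> simple_graph (V i) (E i)"
    and reg: "\<And>i. i \<in> I \<Longrightarrow> regular (V i) (E i) (rr i)"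
    and cg: "\<And>i. i \<in> I \<Longrightarrow> comm_group (A i)"
    and exp: "\<And>i. i \<in> I \<Longrightarrow> group_exponent (A i) dvd ((\<Sum>j\<in>I. rr j) - rr i)"
    and f: "\<And>i. i \<in> I \<Longrightarrow> bij_betw (f i) (V i) (carrier (A i))"
    and x: "x \<in> cart_V I V"
  shows "weight (product_group I A) (cart_V I V) (cart_E I E) (prod_labelling I f) x
       = (\<lambda>j\<in>I. weight (A j) (V j) (E j) (f j) (x j))"
proof -
  have "weight (product_group I A) (cart_V I V) (cart_E I E) (prod_labelling I f) x
       = (\<lambda>j\<in>I. weight (A j) (V j) (E j) (f j) (x j) \<otimes>\<^bsub>A j\<^esub> f j (x j) [^]\<^bsub>A j\<^esub> ((\<Sum>i\<in>I. rr i) - rr j))"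
    using weight_prod_labelling[OF I sg reg cg bij_betw_imp_funcset[OF f] x] .
  also have "\<dots> = (\<lambda>j\<in>I. weight (A j) (V j) (E j) (f j) (x j))"
  proof (rule restrict_ext)
    fix j assume j: "j \<in> I"
    interpret Aj: comm_group "A j"
      using cg[OF j] .
    have "finite (carrier (A j))"
      using f[OF j] sg[OF j] by (simp add: bij_betw_finite simple_graph_def)
    moreover have "f j (x j) \<in> carrier (A j)"
      using bij_betw_apply[OF f[OF j]] x j by (auto simp: cart_V_def)
    ultimately have "f j (x j) [^]\<^bsub>A j\<^esub> ((\<Sum>i\<in>I. rr i) - rr j) = \<one>\<^bsub>A j\<^esub>"
      using Aj.pow_group_exponent_dvd exp[OF j] by blast
    moreover have "weight (A j) (V j) (E j) (f j) (x j) \<in> carrier (A j)"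
      unfolding weight_def using bij_betw_imp_funcset[OF f[OF j]]
      by (intro Aj.finprod_closed) (auto simp: nbhd_def)
    ultimately show "weight (A j) (V j) (E j) (f j) (x j) \<otimes>\<^bsub>A j\<^esub> f j (x j) [^]\<^bsub>A j\<^esub> ((\<Sum>i\<in>I. rr i) - rr j)
        = weight (A j) (V j) (E j) (f j) (x j)"
      by simp
  qed
  finally show ?thesis .
qed

lemma cart_dist_antimagic:
  assumes I: "finite I"
    and sg: "\<And>i. i \<in> I \<Longrightarrow> simple_graph (V i) (E i)"
    and reg: "\<And>i. i \<in> I \<Longrightarrow> regular (V i) (E i) (rr i)"
    and cg: "\<And>i. i \<in> I \<Longrightarrow> comm_group (A i)"
    and exp: "\<And>i. i \<in> I \<Longrightarrow> group_exponent (A i) dvd ((\<Sum>j\<in>I. rr j) - rr i)"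
    and antimagic: "\<And>i. i \<in> I \<Longrightarrow> dist_antimagic (V i) (E i) (A i)"
  shows "dist_antimagic (cart_V I V) (cart_E I E) (product_group I A)"
proof -
  have "\<forall>i\<in>I. \<exists>g. bij_betw g (V i) (carrier (A i)) \<and> inj_on (weight (A i) (V i) (E i) g) (V i)"
    using antimagic unfolding dist_antimagic_def by blast
  then obtain f where "\<forall>i\<in>I. bij_betw (f i) (V i) (carrier (A i)) \<and>
      inj_on (weight (A i) (V i) (E i) (f i)) (V i)"
    by (rule bchoice[THEN exE])
  then have f: "\<And>i. i \<in> I \<Longrightarrow> bij_betw (f i) (V i) (carrier (A i))"
    and inj: "\<And>i. i \<in> I \<Longrightarrow> inj_on (weight (A i) (V i) (E i) (f i)) (V i)"
    by blast+
  have "inj_on (weight (product_group I A) (cart_V I V) (cart_E I E) (prod_labelling I f)) (cart_V I V)"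
  proof (rule inj_onI)
    fix y y' assume y: "y \<in> cart_V I V" and y': "y' \<in> cart_V I V"
      and "weight (product_group I A) (cart_V I V) (cart_E I E) (prod_labelling I f) y =
           weight (product_group I A) (cart_V I V) (cart_E I E) (prod_labelling I f) y'"
    then have eq: "(\<lambda>j\<in>I. weight (A j) (V j) (E j) (f j) (y j)) = (\<lambda>j\<in>I. weight (A j) (V j) (E j) (f j) (y' j))"
      by (simp add: weight_prod_labelling_exponent[OF I sg reg cg exp f y]
          weight_prod_labelling_exponent[OF I sg reg cg exp f y'])
    have same: "weight (A i) (V i) (E i) (f i) (y i) = weight (A i) (V i) (E i) (f i) (y' i)"
      if "i \<in> I" for i
      using fun_cong[OF eq, of i] that by simp
    show "y = y'"
    proof (rule PiE_ext)
      show "y \<in> Pi\<^sub>E I V" "y' \<in> Pi\<^sub>E I V"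
        using y y' by (simp_all add: cart_V_def)
      fix i assume i: "i \<in> I"
      show "y i = y' i"
        using y y' i by (intro inj_onD[OF inj[OF i] same[OF i]]) (auto simp: cart_V_def)
    qed
  qed
  moreover have "bij_betw (prod_labelling I f) (cart_V I V) (carrier (product_group I A))"
    using f by (simp add: bij_betw_prod_labelling)
  ultimately show ?thesis
    unfolding dist_antimagic_def by blast
qed

lemma cart_dist_magic:
  assumes I: "finite I"
    and sg: "\<And>i. i \<in> I \<Longrightarrow> simple_graph (V i) (E i)"
    and reg: "\<And>i. i \<in> I \<Longrightarrow> regular (V i) (E i) (rr i)"
    and cg: "\<And>i. i \<in> I \<Longrightarrow> comm_group (A i)"
    and exp: "\<And>i. i \<in> I \<Longrightarrow> group_exponent (A i) dvd ((\<Sum>j\<in>I. rr j) - rr i)"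
    and magic: "\<And>i. i \<in> I \<Longrightarrow> dist_magic (V i) (E i) (A i)"
  shows "dist_magic (cart_V I V) (cart_E I E) (product_group I A)"
proof -
  have "\<forall>i\<in>I. \<exists>g. bij_betw g (V i) (carrier (A i)) \<and>
      (\<forall>x\<in>V i. \<forall>y\<in>V i. weight (A i) (V i) (E i) g x = weight (A i) (V i) (E i) g y)"
    using magic unfolding dist_magic_def by blast
  then obtain f where "\<forall>i\<in>I. bij_betw (f i) (V i) (carrier (A i)) \<and>
      (\<forall>x\<in>V i. \<forall>y\<in>V i. weight (A i) (V i) (E i) (f i) x = weight (A i) (V i) (E i) (f i) y)"
    by (rule bchoice[THEN exE])
  then have f: "\<And>i. i \<in> I \<Longrightarrow> bij_betw (f i) (V i) (carrier (A i))"
    and const: "\<And>i. i \<in> I \<Longrightarrow> \<forall>x\<in>V i. \<forall>y\<in>V i. weight (A i) (V i) (E i) (f i) x = weight (A i) (V i) (E i) (f i) y"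
    by blast+
  have "weight (product_group I A) (cart_V I V) (cart_E I E) (prod_labelling I f) x =
        weight (product_group I A) (cart_V I V) (cart_E I E) (prod_labelling I f) y"
    if x: "x \<in> cart_V I V" and y: "y \<in> cart_V I V" for x y
  proof -
    have "(\<lambda>j\<in>I. weight (A j) (V j) (E j) (f j) (x j)) = (\<lambda>j\<in>I. weight (A j) (V j) (E j) (f j) (y j))"
    proof (rule restrict_ext)
      fix j assume j: "j \<in> I"
      have "x j \<in> V j" "y j \<in> V j"
        using x y j by (auto simp: cart_V_def)
      then show "weight (A j) (V j) (E j) (f j) (x j) = weight (A j) (V j) (E j) (f j) (y j)"
        using const[OF j] by blast
    qed
    then show ?thesis
      by (simp add: weight_prod_labelling_exponent[OF I sg reg cg exp f] x y)
  qed
  moreover have "bij_betw (prod_labelling I f) (cart_V I V) (carrier (product_group I A))"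
    using f by (simp add: bij_betw_prod_labelling)
  ultimately show ?thesis
    unfolding dist_magic_def by blast
qed

text \<open>The theorem is the case I = {1..k}.\<close>
theorem mainTheorem6:
  fixes k :: nat
    and V :: "nat \<Rightarrow> 'v set"
    and E :: "nat \<Rightarrow> 'v \<Rightarrow> 'v \<Rightarrow> bool"
    and rr :: "nat \<Rightarrow> nat"
    and A :: "nat \<Rightarrow> ('a, 'b) monoid_scheme"
  assumes graphs: "\<And>i. i \<in> {1..k} \<Longrightarrow> simple_graph (V i) (E i)"
    and reg: "\<And>i. i \<in> {1..k} \<Longrightarrow> regular (V i) (E i) (rr i)"
    and nge2: "\<And>i. i \<in> {1..k} \<Longrightarrow> card (V i) \<ge> 2"
    and abel: "\<And>i. i \<in> {1..k} \<Longrightarrow> comm_group (A i)"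
    and ord: "\<And>i. i \<in> {1..k} \<Longrightarrow> order (A i) = card (V i)"
    and expdvd: "\<And>i. i \<in> {1..k} \<Longrightarrow> group_exponent (A i) dvd ((\<Sum>j\<in>{1..k}. rr j) - rr i)"
  shows "((\<forall>i\<in>{1..k}. dist_antimagic (V i) (E i) (A i)) \<longrightarrow>
            dist_antimagic (cart_V {1..k} V) (cart_E {1..k} E) (product_group {1..k} A))
       \<and> ((\<forall>i\<in>{1..k}. dist_magic (V i) (E i) (A i)) \<longrightarrow>
            dist_magic (cart_V {1..k} V) (cart_E {1..k} E) (product_group {1..k} A))"
  using cart_dist_antimagic[OF _ graphs reg abel expdvd] cart_dist_magic[OF _ graphs reg abel expdvd]
  by blast

end
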